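(* Let $d\ge 2$, $k\ge 2$ and $n>d$ be integers. Then $$m^*(n,d,k)\le \min_{\substack{2\le i\le\lceil n/2\rceil\\ k_1,k_2\ge 1,\ k_1+k_2=k}}\Big\{m^*\big(\lceil n/i\rceil,d,k_2\big)+i\cdot m^*\big(\lceil n/i\rceil,\lfloor d/2\rfloor,k_1\big)\Big\}.$$
   Context: For a binary matrix $M$ and a nonempty set $S$ of its columns, $S$ is a stopping set if the submatrix formed by $S$ has no row with exactly one $1$; the stopping distance $s(M)$ is the minimum size of a stopping set ($+\infty$ if none). For positive integers $d,k$, $M$ is $(d,k)$-decodable if $s(M)\ge d+1$ and every column of $M$ has exactly $k$ ones. For positive integers $n,d,k$ (with $d$ possibly exceeding $n$), $m^*(n,d,k)$ is the minimum $m$ such that an $m\times n$ $(d,k)$-decodable binary matrix exists. *)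

theory Defs
  imports Complex_Main "HOL-Library.Extended_Nat"
begin

text \<open>A binary m x n matrix is represented by M :: nat => nat => bool,
  where M r c (for r < m, c < n) is the entry in row r, column c;
  entries outside the range are irrelevant.\<close>

definition stopping_set :: "nat \<Rightarrow> nat \<Rightarrow> (nat \<Rightarrow> nat \<Rightarrow> bool) \<Rightarrow> nat set \<Rightarrow> bool" where
  "stopping_set m n M S \<longleftrightarrow>
     S \<noteq> {} \<and> S \<subseteq> {..<n} \<and> (\<forall>r<m. card {c \<in> S. M r c} \<noteq> 1)"

text \<open>Stopping distance; Inf of the empty set in enat is infinity.\<close>
definition stopping_distance :: "nat \<Rightarrow> nat \<Rightarrow> (nat \<Rightarrow> nat \<Rightarrow> bool) \<Rightarrow> enat" where
  "stopping_distance m n M = (INF S \<in> {S. stopping_set m n M S}. enat (card S))"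

definition decodable :: "nat \<Rightarrow> nat \<Rightarrow> nat \<Rightarrow> nat \<Rightarrow> (nat \<Rightarrow> nat \<Rightarrow> bool) \<Rightarrow> bool" where
  "decodable m n d k M \<longleftrightarrow>
     stopping_distance m n M \<ge> enat (d + 1) \<and> (\<forall>c<n. card {r. r < m \<and> M r c} = k)"

definition m_star :: "nat \<Rightarrow> nat \<Rightarrow> nat \<Rightarrow> nat" where
  "m_star n d k = (LEAST m. \<exists>M. decodable m n d k M)"

end

theory Submission imports Defs begin

text \<open>Split the n columns into i blocks of N = \<lceil>n/i\<rceil> columns (column c is position c mod N of
  block c div N) and stack a (d, k2)-decodable N-column matrix A, acting on all blocks at once,
  over i block-diagonal copies of a (\<lfloor>d/2\<rfloor>, k1)-decodable N-column matrix B. Every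
  column then has k1 + k2 ones. A stopping set meeting two blocks restricts to a stopping set of B
  on each of them, so it has at least 2(\<lfloor>d/2\<rfloor> + 1) \<ge> d + 1 columns; a stopping set inside a
  single block restricts to a stopping set of A, so it has at least d + 1 columns.\<close>

lemma stopping_distance_ge_iff:
  "stopping_distance m n M \<ge> enat (d + 1) \<longleftrightarrow> (\<forall>S. stopping_set m n M S \<longrightarrow> d + 1 \<le> card S)"
  unfolding stopping_distance_def by (simp add: le_INF_iff)

lemma decodable_iff:
  "decodable m n d k M \<longleftrightarrow>
     (\<forall>S. stopping_set m n M S \<longrightarrow> d + 1 \<le> card S) \<and> (\<forall>c<n. card {r. r < m \<and> M r c} = k)"
  unfolding decodable_def stopping_distance_ge_iff ..

lemma card_stopping_set_rowD:
  assumes "stopping_set m n M S" "r < m"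
  shows "card {c \<in> S. M r c} \<noteq> 1"
  using assms unfolding stopping_set_def by blast

lemma div_eq_iff_block:
  "0 < (k::nat) \<Longrightarrow> r div k = c \<longleftrightarrow> c * k \<le> r \<and> r < c * k + k"
  using less_eq_div_iff_mult_less_eq[of k c r] div_less_iff_less_mult[of k r "Suc c"] by auto

text \<open>Each column owns k private rows, so every nonempty column set has a row with a single one
  and there are no stopping sets at all.\<close>

lemma decodable_repetition:
  assumes "k > 0"
  shows "decodable (n * k) n d k (\<lambda>r c. r div k = c)"
  unfolding decodable_iff
proof (intro conjI allI impI)
  fix S assume S: "stopping_set (n * k) n (\<lambda>r c. r div k = c) S"
  then obtain c where c: "c \<in> S" "c < n" unfolding stopping_set_def by blast
  have "c * k < n * k" using c(2) assms by simp
  then have "card {c' \<in> S. c * k div k = c'} \<noteq> 1" by (rule card_stopping_set_rowD[OF S])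
  moreover have "{c' \<in> S. c * k div k = c'} = {c}" using c(1) assms by auto
  ultimately show "d + 1 \<le> card S" by simp
next
  fix c assume "c < n"
  then have "{r. r < n * k \<and> r div k = c} = {c * k..<c * k + k}"
    using assms mult_le_mono1[of "Suc c" n k] by (auto simp: div_eq_iff_block)
  then show "card {r. r < n * k \<and> r div k = c} = k" by simp
qed

lemma m_star_le: "decodable m n d k M \<Longrightarrow> m_star n d k \<le> m"
  unfolding m_star_def by (rule Least_le) blast

lemma decodable_m_star:
  assumes "k > 0"
  obtains M where "decodable (m_star n d k) n d k M"
proof -
  have "\<exists>M. decodable (LEAST m. \<exists>M. decodable m n d k M) n d k M"
    by (rule LeastI_ex) (use decodable_repetition[OF assms] in blast)
  then show ?thesis using that unfolding m_star_def by blast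
qed

definition block_slice :: "nat \<Rightarrow> nat set \<Rightarrow> nat \<Rightarrow> nat set" where
  "block_slice N S g = {p. p < N \<and> g * N + p \<in> S}"

lemma mod_mem_block_slice:
  assumes "N > 0" "c \<in> S"
  shows "c mod N \<in> block_slice N S (c div N)"
  using assms div_mult_mod_eq[of c N] unfolding block_slice_def by simp

lemma card_block_filter:
  assumes "N > 0"
  shows "card {c \<in> S. c div N = g \<and> P (c mod N)} = card {p \<in> block_slice N S g. P p}"
proof -
  have "{c \<in> S. c div N = g \<and> P (c mod N)} = (\<lambda>p. g * N + p) ` {p \<in> block_slice N S g. P p}"
    using assms unfolding block_slice_def
    by (auto simp: image_iff) (metis div_mod_decomp mod_less_divisor)
  then show ?thesis by (simp add: card_image inj_on_def)
qed

lemma card_two_block_slices_le: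
  assumes "finite S" "g1 \<noteq> g2"
  shows "card (block_slice N S g1) + card (block_slice N S g2) \<le> card S"
proof -
  let ?emb = "\<lambda>g. (\<lambda>p. g * N + p) ` block_slice N S g"
  have card_emb: "card (?emb g) = card (block_slice N S g)" for g
    by (simp add: card_image inj_on_def)
  have "?emb g1 \<inter> ?emb g2 = {}"
    using assms(2) unfolding block_slice_def by (auto dest: arg_cong[where f = "\<lambda>c. c div N"])
  moreover have sub: "?emb g1 \<union> ?emb g2 \<subseteq> S" unfolding block_slice_def by blast
  ultimately have "card (?emb g1) + card (?emb g2) = card (?emb g1 \<union> ?emb g2)"
    using finite_subset[OF sub assms(1)] by (simp add: card_Un_disjoint)
  also have "\<dots> \<le> card S" using sub assms(1) by (rule card_mono[rotated])
  finally show ?thesis by (simp add: card_emb)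
qed

lemma div_less_blocks:
  assumes "c < (n::nat)" "n \<le> i * N"
  shows "c div N < i"
  using assms div_times_less_eq_dividend[of c N] mult_le_mono1[of i "c div N" N]
  by (meson leI le_trans not_le)

text \<open>Rows below ma form block-rows of height mb: row ma + g * mb + s is row s of the copy of B
  acting on column block g.\<close>

definition stacked_matrix ::
  "nat \<Rightarrow> nat \<Rightarrow> nat \<Rightarrow> (nat \<Rightarrow> nat \<Rightarrow> bool) \<Rightarrow> (nat \<Rightarrow> nat \<Rightarrow> bool) \<Rightarrow> nat \<Rightarrow> nat \<Rightarrow> bool" where
  "stacked_matrix ma mb N A B r c =
     (if r < ma then A r (c mod N)
      else (r - ma) div mb = c div N \<and> B ((r - ma) mod mb) (c mod N))"

lemma stacked_matrix_top: "r < ma \<Longrightarrow> stacked_matrix ma mb N A B r c = A r (c mod N)"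
  unfolding stacked_matrix_def by simp

lemma stacked_matrix_block:
  "s < mb \<Longrightarrow> stacked_matrix ma mb N A B (ma + g * mb + s) c = (c div N = g \<and> B s (c mod N))"
  unfolding stacked_matrix_def by auto

lemma block_row_less:
  assumes "s < mb" "g < (i::nat)"
  shows "ma + g * mb + s < ma + i * mb"
  using assms mult_le_mono1[of "Suc g" i mb] by simp

lemma stacked_matrix_column_weight:
  assumes "c < n" "n \<le> i * N"
  shows "card {r. r < ma + i * mb \<and> stacked_matrix ma mb N A B r c}
       = card {r. r < ma \<and> A r (c mod N)} + card {s. s < mb \<and> B s (c mod N)}"
proof -
  define g p where "g = c div N" and "p = c mod N"
  have g: "g < i" unfolding g_def by (rule div_less_blocks[OF assms])
  have rows: "{r. r < ma + i * mb \<and> stacked_matrix ma mb N A B r c}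
      = {r. r < ma \<and> A r p} \<union> (\<lambda>s. ma + g * mb + s) ` {s. s < mb \<and> B s p}"
  proof (intro set_eqI iffI)
    fix r assume r: "r \<in> {r. r < ma + i * mb \<and> stacked_matrix ma mb N A B r c}"
    show "r \<in> {r. r < ma \<and> A r p} \<union> (\<lambda>s. ma + g * mb + s) ` {s. s < mb \<and> B s p}"
    proof (cases "r < ma")
      case True
      then show ?thesis using r by (simp add: stacked_matrix_top p_def)
    next
      case False
      then have "(r - ma) div mb = g" "B ((r - ma) mod mb) p" "mb > 0"
        using r unfolding stacked_matrix_def g_def p_def by (auto intro: gr0I)
      moreover have "r = ma + g * mb + (r - ma) mod mb"
        using False div_mult_mod_eq[of "r - ma" mb] unfolding \<open>(r - ma) div mb = g\<close> by linarith
      ultimately show ?thesis by (metis (mono_tags) UnI2 image_eqI mem_Collect_eq mod_less_divisor)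
    qed
  next
    fix r assume "r \<in> {r. r < ma \<and> A r p} \<union> (\<lambda>s. ma + g * mb + s) ` {s. s < mb \<and> B s p}"
    then show "r \<in> {r. r < ma + i * mb \<and> stacked_matrix ma mb N A B r c}"
      using block_row_less[OF _ g] by (auto simp: stacked_matrix_top stacked_matrix_block g_def p_def)
  qed
  have "card ((\<lambda>s. ma + g * mb + s) ` {s. s < mb \<and> B s p}) = card {s. s < mb \<and> B s p}"
    by (rule card_image) (simp add: inj_on_def)
  moreover have "card ({r. r < ma \<and> A r p} \<union> (\<lambda>s. ma + g * mb + s) ` {s. s < mb \<and> B s p})
      = card {r. r < ma \<and> A r p} + card ((\<lambda>s. ma + g * mb + s) ` {s. s < mb \<and> B s p})"
    by (rule card_Un_disjoint) auto
  ultimately show ?thesis unfolding rows p_def[symmetric] by linarith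
qed

lemma stopping_set_block_slice:
  assumes "N > 0" "g < i" "block_slice N S g \<noteq> {}"
    and S: "stopping_set (ma + i * mb) n (stacked_matrix ma mb N A B) S"
  shows "stopping_set mb N B (block_slice N S g)"
  unfolding stopping_set_def
proof (intro conjI allI impI)
  fix s assume s: "s < mb"
  have "{c \<in> S. stacked_matrix ma mb N A B (ma + g * mb + s) c} = {c \<in> S. c div N = g \<and> B s (c mod N)}"
    using stacked_matrix_block[OF s] by blast
  then show "card {p \<in> block_slice N S g. B s p} \<noteq> 1"
    using card_stopping_set_rowD[OF S block_row_less[OF s assms(2)]]
      card_block_filter[OF assms(1), of S g "B s"]
    by simp
qed (use assms(3) in \<open>auto simp: block_slice_def\<close>)

lemma stopping_set_single_block_slice:
  assumes "N > 0" and in_block: "\<forall>c\<in>S. c div N = g"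
    and S: "stopping_set (ma + i * mb) n (stacked_matrix ma mb N A B) S"
  shows "stopping_set ma N A (block_slice N S g)"
  unfolding stopping_set_def
proof (intro conjI allI impI)
  show "block_slice N S g \<noteq> {}"
    using S in_block mod_mem_block_slice[OF assms(1)] unfolding stopping_set_def by force
  fix r assume r: "r < ma"
  have "{c \<in> S. stacked_matrix ma mb N A B r c} = {c \<in> S. c div N = g \<and> A r (c mod N)}"
    using stacked_matrix_top[OF r] in_block by blast
  moreover have "card {c \<in> S. stacked_matrix ma mb N A B r c} \<noteq> 1"
    using card_stopping_set_rowD[OF S] r by simp
  ultimately show "card {p \<in> block_slice N S g. A r p} \<noteq> 1"
    using card_block_filter[OF assms(1), of S g "A r"] by simp
qed (auto simp: block_slice_def)

lemma card_stopping_set_stacked_matrix: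
  assumes N: "N > 0" "n \<le> i * N" and "d \<le> 2 * d' + 1"
    and A_dist: "\<And>T. stopping_set ma N A T \<Longrightarrow> d + 1 \<le> card T"
    and B_dist: "\<And>T. stopping_set mb N B T \<Longrightarrow> d' + 1 \<le> card T"
    and S: "stopping_set (ma + i * mb) n (stacked_matrix ma mb N A B) S"
  shows "d + 1 \<le> card S"
proof -
  have S_cols: "S \<subseteq> {..<n}" "finite S"
    using S unfolding stopping_set_def by (auto intro: finite_subset)
  have block_of: "c div N < i" "block_slice N S (c div N) \<noteq> {}" if "c \<in> S" for c
    using div_less_blocks[OF _ N(2)] S_cols(1) that mod_mem_block_slice[OF N(1) that] by auto
  show ?thesis
  proof (cases "\<exists>c1\<in>S. \<exists>c2\<in>S. c1 div N \<noteq> c2 div N")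
    case True
    then obtain c1 c2 where "c1 \<in> S" "c2 \<in> S" "c1 div N \<noteq> c2 div N" by blast
    then have "2 * (d' + 1) \<le> card (block_slice N S (c1 div N)) + card (block_slice N S (c2 div N))"
      using B_dist stopping_set_block_slice[OF N(1) _ _ S] block_of by (metis add_le_mono mult_2)
    also have "\<dots> \<le> card S"
      using card_two_block_slices_le[OF S_cols(2) \<open>c1 div N \<noteq> c2 div N\<close>] .
    finally show ?thesis using assms(3) by simp
  next
    case False
    obtain c0 where c0: "c0 \<in> S" using S unfolding stopping_set_def by blast
    with False have in_block: "\<forall>c\<in>S. c div N = c0 div N" by blast
    then have "{c \<in> S. c div N = c0 div N \<and> True} = S" by blast
    then have "card S = card (block_slice N S (c0 div N))"
      using card_block_filter[OF N(1), of S "c0 div N" "\<lambda>_. True"] by simp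
    then show ?thesis using A_dist stopping_set_single_block_slice[OF N(1) in_block S] by simp
  qed
qed

theorem decodable_stacked_matrix:
  assumes "N > 0" "n \<le> i * N" "d \<le> 2 * d' + 1"
    and "decodable ma N d k2 A" "decodable mb N d' k1 B"
  shows "decodable (ma + i * mb) n d (k1 + k2) (stacked_matrix ma mb N A B)"
proof -
  have A_dec: "\<forall>T. stopping_set ma N A T \<longrightarrow> d + 1 \<le> card T" "\<forall>p<N. card {r. r < ma \<and> A r p} = k2"
    and B_dec: "\<forall>T. stopping_set mb N B T \<longrightarrow> d' + 1 \<le> card T" "\<forall>p<N. card {s. s < mb \<and> B s p} = k1"
    using assms(4,5) unfolding decodable_iff by blast+
  show ?thesis
    unfolding decodable_iff
  proof (intro conjI allI impI)
    fix S assume "stopping_set (ma + i * mb) n (stacked_matrix ma mb N A B) S"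
    then show "d + 1 \<le> card S"
      using card_stopping_set_stacked_matrix[OF assms(1-3)] A_dec(1) B_dec(1) by blast
  next
    fix c assume "c < n"
    then show "card {r. r < ma + i * mb \<and> stacked_matrix ma mb N A B r c} = k1 + k2"
      using stacked_matrix_column_weight[OF _ assms(2)] A_dec(2) B_dec(2) assms(1) by simp
  qed
qed

corollary m_star_stacked_le:
  assumes "N > 0" "n \<le> i * N" "d \<le> 2 * d' + 1" "k1 > 0" "k2 > 0"
  shows "m_star n d (k1 + k2) \<le> m_star N d k2 + i * m_star N d' k1"
proof -
  obtain A where "decodable (m_star N d k2) N d k2 A" using decodable_m_star[OF assms(5)] .
  moreover obtain B where "decodable (m_star N d' k1) N d' k1 B" using decodable_m_star[OF assms(4)] .
  ultimately show ?thesis by (rule m_star_le[OF decodable_stacked_matrix[OF assms(1-3)]])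
qed

lemma nat_ceiling_divide_bounds:
  assumes "i > 0" "n > 0"
  shows "nat \<lceil>real n / real i\<rceil> > 0" "n \<le> i * nat \<lceil>real n / real i\<rceil>"
proof -
  have "real n / real i > 0" using assms by simp
  then show "nat \<lceil>real n / real i\<rceil> > 0" by linarith
  have "real n / real i \<le> real (nat \<lceil>real n / real i\<rceil>)" by linarith
  then have "real n \<le> real i * real (nat \<lceil>real n / real i\<rceil>)"
    using assms(1) by (metis pos_divide_le_eq of_nat_0_less_iff mult.commute)
  then show "n \<le> i * nat \<lceil>real n / real i\<rceil>" by (simp only: of_nat_le_iff flip: of_nat_mult)
qed

corollary m_star_ceiling_blocks_le:
  assumes "i > 0" "n > 0" "k1 > 0" "k2 > 0"
  shows "m_star n d (k1 + k2)
    \<le> m_star (nat \<lceil>real n / real i\<rceil>) d k2 + i * m_star (nat \<lceil>real n / real i\<rceil>) (d div 2) k1"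
  by (rule m_star_stacked_le[OF nat_ceiling_divide_bounds[OF assms(1,2)] _ assms(3,4)]) simp

theorem theorem5p6:
  fixes n d k :: nat
  assumes "d \<ge> 2" and "k \<ge> 2" and "n > d"
  shows "m_star n d k \<le>
    Min {m_star (nat \<lceil>real n / real i\<rceil>) d k2
          + i * m_star (nat \<lceil>real n / real i\<rceil>) (d div 2) k1
         | i k1 k2. 2 \<le> i \<and> i \<le> nat \<lceil>real n / 2\<rceil> \<and> k1 \<ge> 1 \<and> k2 \<ge> 1 \<and> k1 + k2 = k}"
    (is "_ \<le> Min ?X")
proof (rule Min.boundedI)
  let ?f = "\<lambda>(i, k1, k2). m_star (nat \<lceil>real n / real i\<rceil>) d k2
                         + i * m_star (nat \<lceil>real n / real i\<rceil>) (d div 2) k1"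
  have "?X \<subseteq> ?f ` ({..nat \<lceil>real n / 2\<rceil>} \<times> {..k} \<times> {..k})"
  proof
    fix x assume "x \<in> ?X"
    then obtain i k1 k2 where "i \<le> nat \<lceil>real n / 2\<rceil>" "k1 + k2 = k" "x = ?f (i, k1, k2)"
      by auto
    then show "x \<in> ?f ` ({..nat \<lceil>real n / 2\<rceil>} \<times> {..k} \<times> {..k})"
      by (intro image_eqI[of x _ "(i, k1, k2)"]) auto
  qed
  then show "finite ?X" by (rule finite_subset) simp
  have "2 \<le> nat \<lceil>real n / 2\<rceil>" using assms by linarith
  then have "?f (2, 1, k - 1) \<in> ?X"
    unfolding mem_Collect_eq using assms by (intro exI[of _ 2] exI[of _ 1] exI[of _ "k - 1"]) simp
  then show "?X \<noteq> {}" by blast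
  fix x assume "x \<in> ?X"
  then obtain i k1 k2 where "2 \<le> i" "k1 \<ge> 1" "k2 \<ge> 1" "k = k1 + k2" "x = ?f (i, k1, k2)"
    by auto
  then show "m_star n d k \<le> x" using m_star_ceiling_blocks_le[of i n k1 k2 d] assms(3) by simp
qed

end
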